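(* Let $k\ge 3$, and let $p,q$ be real polynomials with $\deg p=k$, $\deg q=k-1$, whose roots are real, simple and strictly interlacing, $p_1<q_1<p_2<\dots<q_{k-1}<p_k$; let $R=q/p$. Fix $j\in\{1,\dots,k-1\}$ and let $C_j^+$ be the open upper half of the circle having $[p_j,p_{j+1}]$ as a diameter. Then $R$ is injective on $C_j^+$ and $R(C_j^+)\cap\mathbb{R}=\emptyset$; hence $R(C_j^+)\cup\{\infty\}$ is a simple closed loop in $\mathbb{C}P^1$ meeting $\mathbb{R}P^1$ only at $\infty$.
   Context: Here $p_1<\dots<p_k$ are the roots of $p$ and $q_1<\dots<q_{k-1}$ the roots of $q$. *)

theory Defs
  imports "HOL-Analysis.Analysis" "HOL-Computational_Algebra.Polynomial"
begin

definition ratfun :: "real poly \<Rightarrow> real poly \<Rightarrow> complex \<Rightarrow> complex" where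
  "ratfun q p z = poly (map_poly complex_of_real q) z / poly (map_poly complex_of_real p) z"

definition upper_semicircle :: "real \<Rightarrow> real \<Rightarrow> complex set" where
  "upper_semicircle a b =
     {z. cmod (z - complex_of_real ((a + b) / 2)) = (b - a) / 2 \<and> Im z > 0}"

end

theory Submission
  imports Defs
begin

(* The proof rests on the partial fraction
   expansion
       R(z) = q(z)/p(z) = kappa * S(z),   S(z) = sum_i c_i / (z - p_i),
   with a real constant kappa /= 0 and residues c_i > 0; positivity of the c_i is exactly the
   interlacing condition.  For such a "pole sum" S with positive weights and real poles:
   (1) Im S(z) < 0 whenever Im z > 0, so R maps the upper half plane off the real line;
   (2) if z /= w lie on the upper semicircle over [a,b] = [p_j, p_(j+1)], then
       S(z) - S(w) = (w - z) * T with T = sum_i c_i / ((z - p_i)(w - p_i)), and an explicit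
       computation shows that Im((z - a)(w - a) T) is a sum of nonnegative terms, positive for
       any pole outside [a,b]; such a pole exists since k >= 3.  Hence S is injective there. *)

definition pole_sum :: "'i set \<Rightarrow> ('i \<Rightarrow> real) \<Rightarrow> ('i \<Rightarrow> real) \<Rightarrow> complex \<Rightarrow> complex" where
  "pole_sum I c t z = (\<Sum>i\<in>I. complex_of_real (c i) / (z - complex_of_real (t i)))"

lemma degree_prod_linear:
  fixes a :: "'b \<Rightarrow> 'a::field"
  assumes "finite I"
  shows "degree (\<Prod>i\<in>I. [:-a i, 1:]) = card I"
  using assms by (subst degree_prod_eq_sum_degree) auto

lemma poly_eq_smult_prod_linear:
  fixes a :: "'b \<Rightarrow> 'a::field" and P :: "'a poly"
  assumes fin: "finite I" and inj: "inj_on a I" and deg: "degree P = card I"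
    and roots: "\<And>i. i \<in> I \<Longrightarrow> poly P (a i) = 0"
  shows "P = smult (lead_coeff P) (\<Prod>i\<in>I. [:-a i, 1:])"
proof (rule poly_eqI_degree_lead_coeff[where n="card I" and A="a ` I"])
  show "coeff P (card I) = coeff (smult (lead_coeff P) (\<Prod>i\<in>I. [:-a i, 1:])) (card I)"
  proof -
    have "lead_coeff (\<Prod>i\<in>I. [:-a i, 1:]) = 1" by (simp add: lead_coeff_prod)
    then show ?thesis using degree_prod_linear[OF fin, of a] deg by simp
  qed
  show "card I \<le> card (a ` I)" using card_image[OF inj] by simp
  show "degree P \<le> card I" using deg by simp
  show "degree (smult (lead_coeff P) (\<Prod>i\<in>I. [:-a i, 1:])) \<le> card I"
    using degree_prod_linear[OF fin, of a] by simp
  fix z assume "z \<in> a ` I"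
  then obtain i where i: "i \<in> I" "z = a i" by auto
  have "poly (\<Prod>i\<in>I. [:-a i, 1:]) z = 0"
    unfolding poly_prod using i fin by (intro prod_zero bexI[of _ i]) auto
  then show "poly P z = poly (smult (lead_coeff P) (\<Prod>i\<in>I. [:-a i, 1:])) z"
    using roots i by simp
qed

lemma lagrange_interpolation:
  fixes a :: "'b \<Rightarrow> 'a::field" and Q :: "'a poly"
  assumes fin: "finite I" and inj: "inj_on a I" and deg: "degree Q < card I"
  shows "Q = (\<Sum>i\<in>I. smult (poly Q (a i) / (\<Prod>l\<in>I-{i}. a i - a l)) (\<Prod>l\<in>I-{i}. [:-a l, 1:]))"
    (is "Q = ?L")
proof (rule poly_eqI_degree[where A="a ` I"])
  show "card (a ` I) > degree Q" using card_image[OF inj] deg by simp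
  have "degree ?L \<le> card I - 1"
  proof (rule degree_sum_le[OF fin])
    fix i assume "i \<in> I"
    then show "degree (smult (poly Q (a i) / (\<Prod>l\<in>I-{i}. a i - a l)) (\<Prod>l\<in>I-{i}. [:-a l, 1:]))
        \<le> card I - 1"
      using degree_prod_linear[of "I-{i}" a] fin by (simp add: degree_smult_le)
  qed
  then show "card (a ` I) > degree ?L"
    using card_image[OF inj] deg by simp
  fix z assume "z \<in> a ` I"
  then obtain j where j: "j \<in> I" "z = a j" by auto
  have vanish: "(\<Prod>l\<in>I-{i}. a j - a l) = 0" if "i \<in> I - {j}" for i
    using that j fin by (intro prod_zero bexI[of _ j]) auto
  have nonzero: "(\<Prod>l\<in>I-{j}. a j - a l) \<noteq> 0"
    using fin inj j(1) by (subst prod_zero_iff) (auto simp: inj_on_def)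
  have "poly ?L z = (\<Sum>i\<in>I. poly Q (a i) / (\<Prod>l\<in>I-{i}. a i - a l) * (\<Prod>l\<in>I-{i}. a j - a l))"
    by (simp add: poly_sum poly_prod j)
  also have "\<dots> = poly Q (a j) / (\<Prod>l\<in>I-{j}. a j - a l) * (\<Prod>l\<in>I-{j}. a j - a l)"
    using vanish by (subst sum.remove[OF fin j(1)], subst sum.neutral) auto
  also have "\<dots> = poly Q z" using nonzero j by simp
  finally show "poly Q z = poly ?L z" ..
qed

text \<open>Partial fraction expansion of Q/P when P has only simple roots a_i and deg Q < deg P;
  the coefficient of 1/(z - a_i) is Q(a_i)/P'(a_i), written out via the factorisation of P.\<close>
lemma partial_fractions_simple_roots:
  fixes a :: "'b \<Rightarrow> 'a::field" and P Q :: "'a poly"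
  assumes fin: "finite I" and inj: "inj_on a I" and degP: "degree P = card I"
    and roots: "\<And>i. i \<in> I \<Longrightarrow> poly P (a i) = 0" and degQ: "degree Q < card I"
    and z: "\<And>i. i \<in> I \<Longrightarrow> z \<noteq> a i"
  shows "poly Q z / poly P z
    = (\<Sum>i\<in>I. poly Q (a i) / (lead_coeff P * (\<Prod>l\<in>I-{i}. a i - a l)) / (z - a i))"
proof -
  have "P \<noteq> 0" using degP degQ by auto
  then have lc: "lead_coeff P \<noteq> 0" by simp
  have "poly P z = lead_coeff P * (\<Prod>l\<in>I. z - a l)"
    using arg_cong[where f="\<lambda>R. poly R z", OF poly_eq_smult_prod_linear[OF fin inj degP roots]]
    by (simp add: poly_prod)
  moreover have "poly Q z = (\<Sum>i\<in>I. poly Q (a i) / (\<Prod>l\<in>I-{i}. a i - a l) * (\<Prod>l\<in>I-{i}. z - a l))"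
    using arg_cong[where f="\<lambda>R. poly R z", OF lagrange_interpolation[OF fin inj degQ]]
    by (simp add: poly_sum poly_prod)
  moreover have "(\<Prod>l\<in>I. z - a l) = (z - a i) * (\<Prod>l\<in>I-{i}. z - a l)"
    and "(\<Prod>l\<in>I-{i}. z - a l) \<noteq> 0" if "i \<in> I" for i
    using that fin z by (simp_all add: prod.remove)
  ultimately show ?thesis
    using lc z by (auto simp: sum_divide_distrib intro!: sum.cong)
qed

lemma interlacing_strict_mono_on:
  fixes pr qr :: "nat \<Rightarrow> real"
  assumes il: "\<forall>i\<in>{1..k-1}. pr i < qr i \<and> qr i < pr (i + 1)"
  shows "strict_mono_on {1..k} pr" and "strict_mono_on {1..k-1} qr"
proof -
  have step: "pr i < pr (Suc i)" if "i \<in> {1..<k}" for i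
    using il that by force
  show mono: "strict_mono_on {1..k} pr"
    by (rule strict_mono_onI, rule lift_Suc_mono_less_ivl[of "{1..<k}"]) (use step in auto)
  show "strict_mono_on {1..k-1} qr"
  proof (rule strict_mono_onI)
    fix x y :: nat assume "x \<in> {1..k-1}" "y \<in> {1..k-1}" "x < y"
    then have "qr x < pr (x + 1)" "pr (x + 1) \<le> pr y" "pr y < qr y"
      using il strict_mono_on_leD[OF mono, of "x + 1" y] by auto
    then show "qr x < qr y" by linarith
  qed
qed

text \<open>Sign of the residues: at p_i, the factors p_i - q_m and p_i - p_l can be paired so that
  each pair has the same sign, hence the residue q(p_i)/p'(p_i) has the sign of lc q/lc p.\<close>
lemma interlacing_residue_pos:
  fixes pr qr :: "nat \<Rightarrow> real"
  assumes il: "\<forall>i\<in>{1..k-1}. pr i < qr i \<and> qr i < pr (i + 1)" and i: "i \<in> {1..k}"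
  shows "(\<Prod>m\<in>{1..k-1}. pr i - qr m) / (\<Prod>l\<in>{1..k}-{i}. pr i - pr l) > 0"
proof -
  note mono = strict_mono_on_leD[OF interlacing_strict_mono_on(1)[OF il]]
  define h where "h m = (if m < i then m else m + 1)" for m
  have bij: "bij_betw h {1..k-1} ({1..k}-{i})"
  proof (rule bij_betw_imageI)
    show "inj_on h {1..k-1}" by (auto simp: inj_on_def h_def split: if_splits)
    have "l \<in> h ` {1..k-1}" if "l \<in> {1..k}-{i}" for l
    proof (cases "l < i")
      case True
      then show ?thesis using that i by (intro image_eqI[of _ _ l]) (auto simp: h_def)
    next
      case False
      then show ?thesis using that i by (intro image_eqI[of _ _ "l - 1"]) (auto simp: h_def)
    qed
    moreover have "h ` {1..k-1} \<subseteq> {1..k}-{i}" using i by (auto simp: h_def)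
    ultimately show "h ` {1..k-1} = {1..k}-{i}" by blast
  qed
  have "(\<Prod>m\<in>{1..k-1}. pr i - qr m) / (\<Prod>l\<in>{1..k}-{i}. pr i - pr l)
     = (\<Prod>m\<in>{1..k-1}. (pr i - qr m) / (pr i - pr (h m)))"
    using prod.reindex_bij_betw[OF bij, of "\<lambda>l. pr i - pr l"] by (simp add: prod_dividef)
  also have "\<dots> > 0"
  proof (rule prod_pos)
    fix m assume m: "m \<in> {1..k-1}"
    then have im: "pr m < qr m" "qr m < pr (m + 1)" using il by auto
    show "0 < (pr i - qr m) / (pr i - pr (h m))"
    proof (cases "m < i")
      case True
      then have "pr (m + 1) \<le> pr i" using mono[of "m + 1" i] i by auto
      then show ?thesis using True im by (simp add: h_def)
    next
      case False
      then have "pr i \<le> pr m" using mono[of i m] i m by auto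
      then show ?thesis using False im by (intro divide_neg_neg) (auto simp: h_def)
    qed
  qed
  finally show ?thesis .
qed

lemma strict_mono_on_outside_gap:
  fixes f :: "nat \<Rightarrow> real"
  assumes mono: "strict_mono_on {1..k} f" and j: "j \<in> {1..k-1}" and i: "i \<in> {1..k}"
  shows "f i \<notin> {f j<..<f (j + 1)}"
proof -
  have jk: "j \<in> {1..k}" "j + 1 \<in> {1..k}" using j by auto
  show ?thesis
  proof (cases "i \<le> j")
    case True
    then show ?thesis using strict_mono_on_leD[OF mono i jk(1)] by auto
  next
    case False
    then show ?thesis using strict_mono_on_leD[OF mono jk(2) i] by auto
  qed
qed

lemma strict_mono_on_beyond_gap:
  fixes f :: "nat \<Rightarrow> real"
  assumes mono: "strict_mono_on {1..k} f" and j: "j \<in> {1..k-1}" and k: "k \<ge> 3"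
  obtains i where "i \<in> {1..k}" and "f i \<notin> {f j..f (j + 1)}"
proof (cases "j \<ge> 2")
  case True
  then have "f 1 < f j" using strict_mono_onD[OF mono, of 1 j] j by auto
  then show ?thesis using that[of 1] k by auto
next
  case False
  then have "j = 1" using j by auto
  moreover have "f 2 < f 3" using strict_mono_onD[OF mono, of 2 3] k by auto
  ultimately have "f 3 \<notin> {f j..f (j + 1)}" by (simp add: numeral_2_eq_2)
  then show ?thesis using that[of 3] k by auto
qed

lemma ratfun_interlacing_pole_sum:
  fixes p q :: "real poly" and pr qr :: "nat \<Rightarrow> real"
  assumes k: "k \<ge> 1" and degp: "degree p = k" and degq: "degree q = k - 1"
    and roots_p: "{z. poly (map_poly complex_of_real p) z = 0} = complex_of_real ` pr ` {1..k}"
    and roots_q: "{z. poly (map_poly complex_of_real q) z = 0} = complex_of_real ` qr ` {1..k-1}"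
    and il: "\<forall>i\<in>{1..k-1}. pr i < qr i \<and> qr i < pr (i + 1)"
    and z: "Im z \<noteq> 0"
  defines "c i \<equiv> (\<Prod>m\<in>{1..k-1}. pr i - qr m) / (\<Prod>l\<in>{1..k}-{i}. pr i - pr l)"
  shows "ratfun q p z = complex_of_real (lead_coeff q / lead_coeff p) * pole_sum {1..k} c pr z"
proof -
  define I J where "I = {1..k}" and "J = {1..k-1}"
  define a where "a l = complex_of_real (pr l)" for l
  define b where "b m = complex_of_real (qr m)" for m
  define P Q where "P = map_poly complex_of_real p" and "Q = map_poly complex_of_real q"
  note mono = interlacing_strict_mono_on[OF il, THEN strict_mono_on_imp_inj_on]
  have inj_a: "inj_on a I"
    by (rule inj_onI) (use inj_onD[OF mono(1)] in \<open>auto simp: a_def I_def\<close>)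
  have inj_b: "inj_on b J"
    by (rule inj_onI) (use inj_onD[OF mono(2)] in \<open>auto simp: b_def J_def\<close>)
  have degP: "degree P = card I" and degQ: "degree Q = card J"
    unfolding P_def Q_def by (subst degree_map_poly, simp_all add: degp degq I_def J_def)+
  have lcP: "lead_coeff P = complex_of_real (lead_coeff p)"
    and lcQ: "lead_coeff Q = complex_of_real (lead_coeff q)"
    unfolding P_def Q_def by (subst degree_map_poly, simp_all add: coeff_map_poly)+
  have QF: "Q = smult (lead_coeff Q) (\<Prod>m\<in>J. [:-b m, 1:])"
  proof (rule poly_eq_smult_prod_linear[OF _ inj_b degQ])
    fix m assume "m \<in> J"
    then have "b m \<in> {z. poly Q z = 0}" unfolding roots_q[folded Q_def] by (simp add: J_def b_def)
    then show "poly Q (b m) = 0" by simp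
  qed (simp add: J_def)
  have "poly Q (a i) = complex_of_real (lead_coeff q * (\<Prod>m\<in>J. pr i - qr m))" for i
    using arg_cong[where f="\<lambda>R. poly R (a i)", OF QF] by (simp add: lcQ poly_prod a_def b_def)
  then have residue: "poly Q (a i) / (lead_coeff P * (\<Prod>l\<in>I-{i}. a i - a l))
      = complex_of_real (lead_coeff q / lead_coeff p * c i)" for i
    by (simp add: lcP c_def a_def I_def J_def)
  have "ratfun q p z = poly Q z / poly P z" by (simp add: ratfun_def P_def Q_def)
  also have "\<dots> = (\<Sum>i\<in>I. poly Q (a i) / (lead_coeff P * (\<Prod>l\<in>I-{i}. a i - a l)) / (z - a i))"
  proof (rule partial_fractions_simple_roots[OF _ inj_a degP])
    fix i assume "i \<in> I"
    then have "a i \<in> {z. poly P z = 0}" unfolding roots_p[folded P_def] by (simp add: I_def a_def)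
    then show "poly P (a i) = 0" by simp
    show "z \<noteq> a i" using z by (auto simp: a_def)
  qed (use degQ k in \<open>simp_all add: I_def J_def\<close>)
  also have "\<dots> = (\<Sum>i\<in>I. complex_of_real (lead_coeff q / lead_coeff p * c i) / (z - a i))"
    by (simp only: residue)
  also have "\<dots> = complex_of_real (lead_coeff q / lead_coeff p) * pole_sum {1..k} c pr z"
    by (simp add: pole_sum_def sum_distrib_left a_def I_def)
  finally show ?thesis .
qed

lemma upper_semicircle_eq:
  assumes ab: "a < b" and z: "z \<in> upper_semicircle a b"
  shows "(Re z - a)^2 + (Im z)^2 = (b - a) * (Re z - a)" and "Im z > 0"
    and "a < Re z" and "Re z < b"
proof -
  from z have c: "cmod (z - complex_of_real ((a + b) / 2)) = (b - a) / 2" and y: "Im z > 0"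
    by (auto simp: upper_semicircle_def)
  have "(Re z - (a + b) / 2)^2 + (Im z)^2 = ((b - a) / 2)^2"
    using arg_cong[where f="\<lambda>x. x^2", OF c] by (simp add: cmod_power2)
  then show circle: "(Re z - a)^2 + (Im z)^2 = (b - a) * (Re z - a)"
    by (simp add: power2_eq_square field_simps)
  show "Im z > 0" by fact
  have "(Re z - a) * (Re z - b) = -((Im z)^2)"
    using circle by (simp add: power2_eq_square algebra_simps)
  with y have "(Re z - a) * (Re z - b) < 0" by simp
  then show "a < Re z" and "Re z < b" using ab by (auto simp: mult_less_0_iff)
qed

lemma Im_semicircle_ratio:
  assumes ab: "a < b" and z: "z \<in> upper_semicircle a b" and w: "w \<in> upper_semicircle a b"
  defines "V \<equiv> (z - of_real a) * (w - of_real a)"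
  shows "Im (V / ((z - of_real t) * (w - of_real t)))
       = Im V * ((t - a) * (t - b)) / (cmod ((z - of_real t) * (w - of_real t)))^2"
    and "Im V > 0"
proof -
  note cz = upper_semicircle_eq[OF ab z] and cw = upper_semicircle_eq[OF ab w]
  define x1 y1 x2 y2 where "x1 = Re z" "y1 = Im z" "x2 = Re w" "y2 = Im w"
  have ReV: "Re V = (x1 - a) * (x2 - a) - y1 * y2" and ImV: "Im V = (x1 - a) * y2 + (x2 - a) * y1"
    by (simp_all add: V_def x1_y1_x2_y2_def algebra_simps)
  define X where "X = (z - of_real t) * (w - of_real t)"
  have ReX: "Re X = (x1 - t) * (x2 - t) - y1 * y2" and ImX: "Im X = (x1 - t) * y2 + (x2 - t) * y1"
    by (simp_all add: X_def x1_y1_x2_y2_def algebra_simps)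
  have "Im V * Re X - Re V * Im X = Im V * ((t - a) * (t - b))
     - (t - a) * (y2 * ((x1 - a)^2 + y1^2 - (b - a) * (x1 - a)) + y1 * ((x2 - a)^2 + y2^2 - (b - a) * (x2 - a)))"
    unfolding ReV ImV ReX ImX by (simp add: power2_eq_square algebra_simps)
  also have "\<dots> = Im V * ((t - a) * (t - b))"
    using cz(1) cw(1) by (simp add: x1_y1_x2_y2_def)
  finally show "Im (V / X) = Im V * ((t - a) * (t - b)) / (cmod X)^2"
    unfolding Im_divide cmod_power2 by (simp add: algebra_simps)
  show "Im V > 0"
    using cz cw unfolding ImV x1_y1_x2_y2_def by (intro add_pos_pos mult_pos_pos) auto
qed

lemma Im_pole_sum_neg:
  assumes fin: "finite I" and ne: "I \<noteq> {}" and pos: "\<And>i. i \<in> I \<Longrightarrow> c i > 0"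
    and z: "Im z > 0"
  shows "Im (pole_sum I c t z) < 0"
proof -
  have "Im (pole_sum I c t z) = - (\<Sum>i\<in>I. c i * Im z / (cmod (z - of_real (t i)))^2)"
    by (simp add: pole_sum_def Im_divide cmod_power2 sum_negf)
  moreover have "(\<Sum>i\<in>I. c i * Im z / (cmod (z - of_real (t i)))^2) > 0"
  proof (rule sum_pos[OF fin ne])
    fix i assume "i \<in> I"
    moreover have "z - of_real (t i) \<noteq> 0" using z by (auto simp: complex_eq_iff)
    ultimately show "0 < c i * Im z / (cmod (z - of_real (t i)))^2"
      using pos z by simp
  qed
  ultimately show ?thesis by simp
qed

lemma pole_sum_inj_on_upper_semicircle:
  assumes fin: "finite I" and ab: "a < b" and pos: "\<And>i. i \<in> I \<Longrightarrow> c i > 0"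
    and outside: "\<And>i. i \<in> I \<Longrightarrow> t i \<notin> {a<..<b}"
    and i0: "i0 \<in> I" and far: "t i0 \<notin> {a..b}"
  shows "inj_on (pole_sum I c t) (upper_semicircle a b)"
proof (rule inj_onI, rule ccontr)
  fix z w assume z: "z \<in> upper_semicircle a b" and w: "w \<in> upper_semicircle a b"
    and eq: "pole_sum I c t z = pole_sum I c t w" and ne: "z \<noteq> w"
  define X where "X i = (z - of_real (t i)) * (w - of_real (t i))" for i
  have zt: "z - of_real (t i) \<noteq> 0" and wt: "w - of_real (t i) \<noteq> 0" for i
    using upper_semicircle_eq(2)[OF ab z] upper_semicircle_eq(2)[OF ab w]
    by (auto simp: complex_eq_iff)
  have X0: "X i \<noteq> 0" for i using zt wt by (simp add: X_def)
  define T where "T = (\<Sum>i\<in>I. of_real (c i) / X i)"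
  have "pole_sum I c t z - pole_sum I c t w = (w - z) * T"
    unfolding pole_sum_def T_def sum_subtractf[symmetric] sum_distrib_left
    by (rule sum.cong) (use zt wt in \<open>auto simp: X_def field_simps\<close>)
  with eq ne have T0: "T = 0" by simp
  define V where "V = (z - of_real a) * (w - of_real a)"
  note ratio = Im_semicircle_ratio[OF ab z w, folded V_def]
  have gap: "(t i - a) * (t i - b) \<ge> 0" if "i \<in> I" for i
    using outside[OF that] ab
    by (cases "t i \<le> a") (auto intro: mult_nonpos_nonpos mult_nonneg_nonneg)
  have "Im (V * T) = (\<Sum>i\<in>I. c i * (Im V * ((t i - a) * (t i - b)) / (cmod (X i))^2))"
    unfolding T_def sum_distrib_left Im_sum
  proof (rule sum.cong[OF refl])
    fix i
    have "Im (V * (of_real (c i) / X i)) = Im (of_real (c i) * (V / X i))"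
      by (simp add: field_simps)
    also have "\<dots> = c i * Im (V / X i)" by (simp del: times_divide_eq_right)
    also have "\<dots> = c i * (Im V * ((t i - a) * (t i - b)) / (cmod (X i))^2)"
      using ratio(1)[of "t i"] by (simp only: X_def)
    finally show "Im (V * (of_real (c i) / X i))
        = c i * (Im V * ((t i - a) * (t i - b)) / (cmod (X i))^2)" .
  qed
  also have "\<dots> > 0"
  proof (rule sum_pos2[OF fin i0])
    have "(t i0 - a) * (t i0 - b) > 0"
      using far ab by (cases "t i0 < a") (auto intro: mult_neg_neg)
    then show "0 < c i0 * (Im V * ((t i0 - a) * (t i0 - b)) / (cmod (X i0))^2)"
      using pos[OF i0] ratio(2) X0[of i0] by simp
    show "0 \<le> c i * (Im V * ((t i - a) * (t i - b)) / (cmod (X i))^2)" if "i \<in> I" for i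
      using pos[OF that] ratio(2) gap[OF that] by simp
  qed
  finally show False using T0 by simp
qed

theorem mainTheorem10:
  fixes p q :: "real poly" and k j :: nat and pr qr :: "nat \<Rightarrow> real"
  assumes "k \<ge> 3"
    and "degree p = k" and "degree q = k - 1"
    and "{x. poly p x = 0} = pr ` {1..k}"
    and "{x. poly q x = 0} = qr ` {1..k-1}"
    and "{z. poly (map_poly complex_of_real p) z = 0} = complex_of_real ` pr ` {1..k}"
    and "{z. poly (map_poly complex_of_real q) z = 0} = complex_of_real ` qr ` {1..k-1}"
    and "\<forall>i\<in>{1..k}. order (pr i) p = 1"
    and "\<forall>i\<in>{1..k-1}. order (qr i) q = 1"
    and "\<forall>i\<in>{1..k-1}. pr i < qr i \<and> qr i < pr (i + 1)"
    and "j \<in> {1..k-1}"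
  shows "inj_on (ratfun q p) (upper_semicircle (pr j) (pr (j + 1)))
     \<and> ratfun q p ` upper_semicircle (pr j) (pr (j + 1)) \<inter> \<real> = {}"
proof -
  note k3 = assms(1) and il = assms(10) and j = assms(11)
  define C where "C = upper_semicircle (pr j) (pr (j + 1))"
  define \<kappa> where "\<kappa> = lead_coeff q / lead_coeff p"
  define c where "c = (\<lambda>i. (\<Prod>m\<in>{1..k-1}. pr i - qr m) / (\<Prod>l\<in>{1..k}-{i}. pr i - pr l))"
  define S where "S = pole_sum {1..k} c pr"
  have mono: "strict_mono_on {1..k} pr" by (rule interlacing_strict_mono_on(1)[OF il])
  have ab: "pr j < pr (j + 1)" using strict_mono_onD[OF mono, of j "j + 1"] j by auto
  have upper: "Im z > 0" if "z \<in> C" for z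
    using upper_semicircle_eq(2)[OF ab] that by (simp add: C_def)
  have R: "ratfun q p z = complex_of_real \<kappa> * S z" if "z \<in> C" for z
    using ratfun_interlacing_pole_sum[OF _ assms(2,3,6,7) il] upper[OF that] k3
    unfolding \<kappa>_def c_def S_def by simp
  have "p \<noteq> 0" and "q \<noteq> 0" using assms(1-3) by auto
  then have \<kappa>: "\<kappa> \<noteq> 0" by (simp add: \<kappa>_def)
  have c_pos: "c i > 0" if "i \<in> {1..k}" for i
    using interlacing_residue_pos[OF il that] by (simp add: c_def)
  obtain i0 where i0: "i0 \<in> {1..k}" "pr i0 \<notin> {pr j..pr (j + 1)}"
    using strict_mono_on_beyond_gap[OF mono j k3] .
  have "inj_on S C" unfolding S_def C_def
    by (rule pole_sum_inj_on_upper_semicircle[of _ _ _ c pr, OF finite_atLeastAtMost ab c_pos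
          strict_mono_on_outside_gap[OF mono j] i0])
  then have "inj_on (\<lambda>z. complex_of_real \<kappa> * S z) C" using \<kappa> by (auto simp: inj_on_def)
  then have "inj_on (ratfun q p) C" by (simp add: inj_on_cong[OF R])
  moreover have "Im (ratfun q p z) \<noteq> 0" if "z \<in> C" for z
  proof -
    have "Im (S z) < 0"
      unfolding S_def using c_pos upper[OF that] k3 by (intro Im_pole_sum_neg) auto
    then show ?thesis using R[OF that] \<kappa> by simp
  qed
  ultimately show ?thesis by (auto simp: C_def complex_is_Real_iff)
qed

end
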